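(* Let $(S,+)$ be a commutative cancellative semigroup with no identity element such that its difference group $S-S$ carries a multiplication making it an integral domain, and let $A\subseteq S$. Then $A$ is PP-rich in $S$ if and only if for every $R\in\mathcal{P}_f(\mathbb{P})$ there exist $a\in A$ and $x\in S$ such that $S_R(a,x)\subseteq A$.
   Context: $S-S=\{a-b:a,b\in S\}$ is the difference group of $S$ (with $(a-b)+b=a$), containing $S$. $\mathbb{P}$ is the set of polynomial functions $S-S\to S-S$ in one variable with coefficients in $S-S$ and zero constant term; $\mathcal{P}_f(\mathbb{P})$ is the set of its nonempty finite subsets. For $R\in\mathcal{P}_f(\mathbb{P})$ and $a,x\in S$, $S_R(a,x)=\{a+f(x): f\in R\}$. $A\subseteq S$ is PP-rich if for every $R\in\mathcal{P}_f(\mathbb{P})$ there exist $a,x\in S$ with $S_R(a,x)\subseteq A$. *)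

theory Defs
  imports "HOL-Computational_Algebra.Polynomial"
begin

text \<open>Setting: the difference group S - S is modelled as the whole carrier of a
type 'a of class idom (an integral domain, whose additive group is S - S);
S is a subset of it that is closed under addition, whose differences exhaust
the type, and which has no identity element.\<close>

definition comm_canc_semigroup_no_identity_in :: "'a::idom set \<Rightarrow> bool" where
  "comm_canc_semigroup_no_identity_in S \<longleftrightarrow>
     (\<forall>a\<in>S. \<forall>b\<in>S. a + b \<in> S) \<and>
     {a - b | a b. a \<in> S \<and> b \<in> S} = UNIV \<and>
     \<not> (\<exists>e\<in>S. \<forall>s\<in>S. e + s = s)"

definition PP :: "('a::idom \<Rightarrow> 'a) set" where
  "PP = {(\<lambda>x. poly p x) | p. coeff p 0 = 0}"

definition Pf :: "'b set \<Rightarrow> 'b set set" where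
  "Pf X = {R. R \<subseteq> X \<and> finite R \<and> R \<noteq> {}}"

definition S_R :: "('a::idom \<Rightarrow> 'a) set \<Rightarrow> 'a \<Rightarrow> 'a \<Rightarrow> 'a set" where
  "S_R R a x = {a + f x | f. f \<in> R}"

definition PP_rich :: "'a::idom set \<Rightarrow> 'a set \<Rightarrow> bool" where
  "PP_rich S A \<longleftrightarrow> (\<forall>R \<in> Pf PP. \<exists>a\<in>S. \<exists>x\<in>S. S_R R a x \<subseteq> A)"

end

theory Submission
  imports Defs
begin

text \<open>The zero function lies in \<P>, and \<open>S_R (insert 0 R) a x\<close> contains the base point
\<open>a\<close> itself. So a configuration for \<open>R \<union> {0}\<close> inside \<open>A\<close> has its base point in \<open>A\<close>; the
converse is immediate from \<open>A \<subseteq> S\<close>.\<close>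

lemma zero_fun_in_PP: "(\<lambda>_. 0) \<in> PP"
  unfolding PP_def by (rule CollectI, rule exI[of _ 0]) auto

lemma insert_in_Pf: "R \<in> Pf X \<Longrightarrow> f \<in> X \<Longrightarrow> insert f R \<in> Pf X"
  unfolding Pf_def by simp

lemma S_R_insert_zero_fun: "S_R (insert (\<lambda>_. 0) R) a x = insert a (S_R R a x)"
  unfolding S_R_def by auto

lemma PP_rich_base_point_in:
  assumes "PP_rich S A" and "R \<in> Pf PP"
  shows "\<exists>a\<in>A. \<exists>x\<in>S. S_R R a x \<subseteq> A"
proof -
  have "insert (\<lambda>_. 0) R \<in> Pf PP"
    using assms(2) zero_fun_in_PP by (rule insert_in_Pf)
  then obtain a x where "x \<in> S" and "S_R (insert (\<lambda>_. 0) R) a x \<subseteq> A"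
    using assms(1) unfolding PP_rich_def by blast
  then show ?thesis
    unfolding S_R_insert_zero_fun by blast
qed

theorem lemma5p5:
  fixes S A :: "'a::idom set"
  assumes "comm_canc_semigroup_no_identity_in S"
    and "A \<subseteq> S"
  shows "PP_rich S A \<longleftrightarrow> (\<forall>R \<in> Pf PP. \<exists>a\<in>A. \<exists>x\<in>S. S_R R a x \<subseteq> A)"
proof
  show "\<forall>R \<in> Pf PP. \<exists>a\<in>A. \<exists>x\<in>S. S_R R a x \<subseteq> A" if "PP_rich S A"
    using that PP_rich_base_point_in by blast
next
  show "PP_rich S A" if "\<forall>R \<in> Pf PP. \<exists>a\<in>A. \<exists>x\<in>S. S_R R a x \<subseteq> A"
    using that assms(2) unfolding PP_rich_def by blast
qed

end
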